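(* Let $P\subseteq[0,1]^n$ be a polytope and $c\in\mathbb{R}^n$, and consider the instance $\mathcal{I}$: $\max\{c^\top x: x\in P\cap\{0,1\}^n\}$. Let $Q\subseteq[0,1]^{2n}$ be the convex hull of all points $(x,y)$ where $x$ is a vertex of $P$ and, for each $i$, $y_i=1$ if $x_i\in\{0,1\}$ and $y_i=0$ if $x_i\in(0,1)$. Let $BDG(\mathcal{I})$ be the instance $\max\{c^\top x:(x,y)\in Q,\ x\in\{0,1\}^n,\ y\in\{0,1\}^n\}$. Then $\{x:(x,y)\in Q\cap\{0,1\}^{2n}\}=P\cap\{0,1\}^n$ (so $BDG(\mathcal{I})$ is equivalent to $\mathcal{I}$), and there exists a branch-and-bound tree $\mathcal{T}^*(BDG(\mathcal{I}))$ that solves $BDG(\mathcal{I})$ with $|\mathcal{T}^*(BDG(\mathcal{I}))|\le 4n+1$.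
   Context: A branch-and-bound tree for a binary program over a polytope is a rooted binary tree in which each node corresponds to the polytope intersected with constraints fixing some variables to $0$ or $1$ (those fixed on the path from the root), and each internal node branches on one binary variable $z$, its two children adding $z=0$ and $z=1$ respectively. The tree solves the instance if at every leaf the LP relaxation is infeasible, or its optimal solution (an extreme point) is integral, or its value is no better than the best integral solution found at the leaves. $|\mathcal{T}|$ denotes the number of nodes. *)

theory Defs
  imports "HOL-Analysis.Analysis"
begin

text \<open>Generic branch-and-bound trees. Branching variables are indexed by type 'v; the
value of variable v at a point p of the ambient space is coord v p.\<close>

datatype 'v bbtree = Leaf | Branch 'v "'v bbtree" "'v bbtree"

fun bb_size :: "'v bbtree \<Rightarrow> nat" where
  "bb_size Leaf = 1"
| "bb_size (Branch v l r) = 1 + bb_size l + bb_size r"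

fun bb_leaf_regions :: "('v \<Rightarrow> 'a \<Rightarrow> real) \<Rightarrow> 'a set \<Rightarrow> 'v bbtree \<Rightarrow> 'a set set" where
  "bb_leaf_regions coord R Leaf = {R}"
| "bb_leaf_regions coord R (Branch v l r) =
     bb_leaf_regions coord (R \<inter> {p. coord v p = 0}) l \<union>
     bb_leaf_regions coord (R \<inter> {p. coord v p = 1}) r"

definition lp_optimal :: "('a \<Rightarrow> real) \<Rightarrow> 'a set \<Rightarrow> 'a \<Rightarrow> bool" where
  "lp_optimal f R p \<longleftrightarrow> p \<in> R \<and> (\<forall>q\<in>R. f q \<le> f p)"

definition lp_value :: "('a \<Rightarrow> real) \<Rightarrow> 'a set \<Rightarrow> real" where
  "lp_value f R = Sup (f ` R)"

definition bb_integral :: "('v \<Rightarrow> 'a \<Rightarrow> real) \<Rightarrow> 'a \<Rightarrow> bool" where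
  "bb_integral coord p \<longleftrightarrow> (\<forall>v. coord v p \<in> {0, 1})"

definition integral_leaf :: "('v \<Rightarrow> 'a::real_vector \<Rightarrow> real) \<Rightarrow> ('a \<Rightarrow> real) \<Rightarrow> 'a set \<Rightarrow> bool" where
  "integral_leaf coord f L \<longleftrightarrow>
     (\<exists>p. lp_optimal f L p \<and> p extreme_point_of L \<and> bb_integral coord p)"

definition bb_solves :: "('v \<Rightarrow> 'a::real_vector \<Rightarrow> real) \<Rightarrow> ('a \<Rightarrow> real) \<Rightarrow> 'a set \<Rightarrow> 'v bbtree \<Rightarrow> bool" where
  "bb_solves coord f R T \<longleftrightarrow>
     (\<forall>L \<in> bb_leaf_regions coord R T.
        L = {} \<or> integral_leaf coord f L \<or>
        (\<exists>L' \<in> bb_leaf_regions coord R T. integral_leaf coord f L' \<and> lp_value f L \<le> lp_value f L'))"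

text \<open>Variables of BDG: Inl i is x_i, Inr i is y_i.\<close>
definition bdg_coord :: "'n + 'n \<Rightarrow> (real^'n) \<times> (real^'n) \<Rightarrow> real" where
  "bdg_coord v p = (case v of Inl i \<Rightarrow> fst p $ i | Inr i \<Rightarrow> snd p $ i)"

definition binary_vec :: "real^'n \<Rightarrow> bool" where
  "binary_vec x \<longleftrightarrow> (\<forall>i. x $ i \<in> {0, 1})"

definition bdg_indicator :: "real^'n \<Rightarrow> real^'n" where
  "bdg_indicator x = (\<chi> i. if x $ i \<in> {0, 1} then 1 else 0)"

definition bdg_polytope :: "(real^'n) set \<Rightarrow> ((real^'n) \<times> (real^'n)) set" where
  "bdg_polytope P = convex hull {(x, bdg_indicator x) | x. x extreme_point_of P}"

end

theory Submission imports Defs begin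

text \<open>Binary points of a subset of the unit cube are extreme points, so the binary points of Q
project onto the binary points of P. The tree branches on y_1, \<dots>, y_n in turn and, below each
y_i = 0, on x_i. Q \<inter> {y_i = 0} is a face of Q all of whose vertices have 0 < x_i < 1, so
it lies in that open slab and both leaves below y_i = 0 are empty. The last leaf Q \<inter> {y = 1}
is a face of Q all of whose vertices are integral, so a linear objective attains its maximum
there at an integral extreme point.\<close>

lemma convex_combination_binary_eq:
  fixes u a b :: real
  assumes "0 < u" "u < 1" "a \<in> {0..1}" "b \<in> {0..1}" "(1 - u) * a + u * b \<in> {0, 1}"
  shows "a = b"
proof -
  have nonneg: "(1 - u) * a \<ge> 0" "u * b \<ge> 0" "(1 - u) * (1 - a) \<ge> 0" "u * (1 - b) \<ge> 0"
    using assms by auto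
  consider "(1 - u) * a + u * b = 0" | "(1 - u) * (1 - a) + u * (1 - b) = 0"
    using assms(5) by (auto simp: algebra_simps)
  then show ?thesis
    by cases (use nonneg assms in \<open>auto simp: add_nonneg_eq_0_iff\<close>)
qed

lemma binary_vec_extreme_point_of:
  fixes P :: "(real^'n) set"
  assumes "P \<subseteq> cbox 0 1" "x \<in> P" "binary_vec x"
  shows "x extreme_point_of P"
  unfolding extreme_point_of_def
proof (intro conjI ballI notI \<open>x \<in> P\<close>)
  fix a b assume ab: "a \<in> P" "b \<in> P" "x \<in> open_segment a b"
  then obtain u where u: "a \<noteq> b" "0 < u" "u < 1" "x = (1 - u) *\<^sub>R a + u *\<^sub>R b"
    by (auto simp: in_segment)
  have "a $ i = b $ i" for i
  proof (rule convex_combination_binary_eq[OF u(2,3)])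
    show "a $ i \<in> {0..1}" "b $ i \<in> {0..1}"
      using assms(1) ab by (auto simp: mem_box_cart)
    show "(1 - u) * a $ i + u * b $ i \<in> {0, 1}"
      using \<open>binary_vec x\<close> u(4) by (auto simp: binary_vec_def)
  qed
  then show False
    using u(1) by (simp add: vec_eq_iff)
qed

lemma face_of_convex_hull_subset_convex:
  fixes S :: "'a::euclidean_space set"
  assumes "compact S" "F face_of convex hull S" "convex C" "S \<inter> F \<subseteq> C"
  shows "F \<subseteq> C"
proof -
  obtain S' where "S' \<subseteq> S" "F = convex hull S'"
    using face_of_convex_hull_subset[OF assms(1,2)] by blast
  then show ?thesis
    using assms(3,4) hull_subset[of S' convex] by (metis hull_minimal le_inf_iff subset_trans)
qed

lemma extreme_point_maximizing_inner:
  fixes S :: "'a::euclidean_space set"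
  assumes "compact S" "convex S" "S \<noteq> {}"
  obtains e where "e extreme_point_of S" "\<forall>q\<in>S. a \<bullet> q \<le> a \<bullet> e"
proof -
  have "continuous_on S (\<lambda>p. a \<bullet> p)"
    by (intro continuous_intros)
  then obtain m where m: "m \<in> S" "\<forall>q\<in>S. a \<bullet> q \<le> a \<bullet> m"
    using continuous_attains_sup[OF assms(1,3)] by blast
  define M where "M = S \<inter> {p. a \<bullet> p = a \<bullet> m}"
  have face: "M face_of S"
    unfolding M_def using m by (intro face_of_Int_supporting_hyperplane_le assms) auto
  have "compact M" "convex M" "M \<noteq> {}"
    using face_of_imp_compact[OF assms(2,1) face] face_of_imp_convex[OF face] m
    by (auto simp: M_def)
  then obtain e where e: "e extreme_point_of M"
    using extreme_point_exists_convex by blast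
  show ?thesis
  proof
    show "e extreme_point_of S"
      using e extreme_point_of_face[OF face] by blast
    show "\<forall>q\<in>S. a \<bullet> q \<le> a \<bullet> e"
      using e m by (auto simp: M_def extreme_point_of_def)
  qed
qed

lemma integral_leaf_face_of_convex_hull:
  fixes S :: "'a::euclidean_space set"
  assumes "finite S" "L face_of convex hull S" "L \<noteq> {}" "\<forall>s\<in>S \<inter> L. bb_integral coord s"
  shows "integral_leaf coord (\<lambda>p. a \<bullet> p) L"
proof -
  have hull: "compact (convex hull S)" "convex (convex hull S)"
    using assms(1) by (auto simp: compact_convex_hull finite_imp_compact)
  have "compact L" "convex L"
    using face_of_imp_compact[OF hull(2,1) assms(2)] face_of_imp_convex[OF assms(2)] by auto
  then obtain e where e: "e extreme_point_of L" "\<forall>q\<in>L. a \<bullet> q \<le> a \<bullet> e"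
    using extreme_point_maximizing_inner assms(3) by blast
  have "e \<in> S" "e \<in> L"
    using e(1) extreme_point_of_face[OF assms(2)] extreme_point_of_convex_hull
    by (blast, simp add: extreme_point_of_def)
  then show ?thesis
    unfolding integral_leaf_def lp_optimal_def using e assms(4) by blast
qed

definition bdg_vertices :: "(real^'n) set \<Rightarrow> ((real^'n) \<times> (real^'n)) set" where
  "bdg_vertices P = (\<lambda>x. (x, bdg_indicator x)) ` {x. x extreme_point_of P}"

lemma bdg_polytope_eq_hull_vertices: "bdg_polytope P = convex hull bdg_vertices P"
  unfolding bdg_polytope_def bdg_vertices_def by (simp add: setcompr_eq_image)

lemma finite_bdg_vertices: "polytope P \<Longrightarrow> finite (bdg_vertices P)"
  unfolding bdg_vertices_def
  by (simp add: finite_polyhedron_extreme_points polytope_imp_polyhedron)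

lemma bdg_indicator_in_unit_cube: "bdg_indicator x \<in> cbox 0 1"
  by (simp add: mem_box_cart bdg_indicator_def)

lemma bdg_polytope_subset_Times: "convex P \<Longrightarrow> bdg_polytope P \<subseteq> P \<times> cbox 0 1"
  unfolding bdg_polytope_eq_hull_vertices bdg_vertices_def
  by (rule hull_minimal)
     (auto simp: convex_Times bdg_indicator_in_unit_cube extreme_point_of_def)

lemma binary_points_bdg_polytope:
  fixes P :: "(real^'n) set"
  assumes "convex P" "P \<subseteq> cbox 0 1"
  shows "{x. \<exists>y. (x, y) \<in> bdg_polytope P \<and> binary_vec x \<and> binary_vec y}
         = P \<inter> {x. binary_vec x}"
proof
  show "{x. \<exists>y. (x, y) \<in> bdg_polytope P \<and> binary_vec x \<and> binary_vec y} \<subseteq> P \<inter> {x. binary_vec x}"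
    using bdg_polytope_subset_Times[OF assms(1)] by blast
next
  have "(x, bdg_indicator x) \<in> bdg_polytope P \<and> binary_vec (bdg_indicator x)"
    if "x \<in> P" "binary_vec x" for x
    using binary_vec_extreme_point_of[OF assms(2) that]
    by (auto simp: bdg_polytope_eq_hull_vertices bdg_vertices_def binary_vec_def
        bdg_indicator_def intro!: hull_inc)
  then show "P \<inter> {x. binary_vec x} \<subseteq> {x. \<exists>y. (x, y) \<in> bdg_polytope P \<and> binary_vec x \<and> binary_vec y}"
    by blast
qed

lemma inner_Pair_zero_axis: "((0::real^'m), axis i (1::real)) \<bullet> p = snd p $ i"
  by (cases p) (simp add: inner_commute[of "axis i 1"] inner_axis)

lemma bdg_polytope_fractional_if_indicator_zero:
  fixes P :: "(real^'n) set"
  assumes "polytope P" "P \<subseteq> cbox 0 1" "p \<in> bdg_polytope P" "snd p $ i = 0"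
  shows "fst p $ i \<in> {0<..<1}"
proof -
  define Q where "Q = bdg_polytope P"
  define F where "F = Q \<inter> {p. ((0::real^'n), axis i (1::real)) \<bullet> p = 0}"
  have Q_cube: "Q \<subseteq> P \<times> cbox 0 1"
    unfolding Q_def by (intro bdg_polytope_subset_Times polytope_imp_convex assms(1))
  have "F face_of Q"
    unfolding F_def using Q_cube
    by (intro face_of_Int_supporting_hyperplane_ge)
       (auto simp: Q_def bdg_polytope_def inner_Pair_zero_axis mem_box_cart)
  then have "F face_of convex hull bdg_vertices P"
    by (simp add: Q_def bdg_polytope_eq_hull_vertices)
  moreover have "convex {p::(real^'n) \<times> (real^'n). fst p $ i \<in> {0<..<1}}"
    using convex_linear_vimage[of "\<lambda>p. fst p $ i" "{0<..<1::real}"]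
    by (simp add: vimage_def linear_iff)
  moreover have "bdg_vertices P \<inter> F \<subseteq> {p. fst p $ i \<in> {0<..<1}}"
    using assms(2)
    by (force simp: F_def bdg_vertices_def inner_Pair_zero_axis bdg_indicator_def
        extreme_point_of_def mem_box_cart order.order_iff_strict)
  ultimately have "F \<subseteq> {p. fst p $ i \<in> {0<..<1}}"
    using face_of_convex_hull_subset_convex finite_bdg_vertices[OF assms(1)] finite_imp_compact
    by blast
  then show ?thesis
    using assms(3,4) by (auto simp: F_def Q_def inner_Pair_zero_axis)
qed

lemma bdg_polytope_top_face:
  fixes P :: "(real^'n) set"
  assumes "convex P"
  shows "bdg_polytope P \<inter> {p. \<forall>j. snd p $ j = 1} face_of bdg_polytope P"
proof -
  define a :: "(real^'n) \<times> (real^'n)" where "a = (0, 1)"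
  have a_inner: "a \<bullet> p = (\<Sum>j\<in>UNIV. snd p $ j)" for p
    by (cases p) (simp add: a_def inner_vec_def)
  have slack_nonneg: "0 \<le> 1 - snd p $ j" if "p \<in> bdg_polytope P" for p j
    using bdg_polytope_subset_Times[OF assms] that by (auto simp: mem_box_cart)
  have "a \<bullet> p = real CARD('n) \<longleftrightarrow> (\<forall>j. snd p $ j = 1)" if "p \<in> bdg_polytope P" for p
  proof -
    have "a \<bullet> p = real CARD('n) \<longleftrightarrow> (\<Sum>j\<in>UNIV. 1 - snd p $ j) = 0"
      by (auto simp: a_inner sum_subtractf)
    also have "\<dots> \<longleftrightarrow> (\<forall>j. snd p $ j = 1)"
      using slack_nonneg[OF that] by (simp add: sum_nonneg_eq_0_iff)
    finally show ?thesis .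
  qed
  then have "bdg_polytope P \<inter> {p. \<forall>j. snd p $ j = 1}
             = bdg_polytope P \<inter> {p. a \<bullet> p = real CARD('n)}"
    by blast
  moreover have "a \<bullet> p \<le> real CARD('n)" if "p \<in> bdg_polytope P" for p
    using sum_nonneg[of UNIV "\<lambda>j. 1 - snd p $ j"] slack_nonneg[OF that]
    by (simp add: a_inner sum_subtractf)
  ultimately show ?thesis
    by (simp add: face_of_Int_supporting_hyperplane_le bdg_polytope_def)
qed

lemma integral_leaf_bdg_top_face:
  fixes P :: "(real^'n) set" and c :: "real^'n"
  assumes "polytope P" "bdg_polytope P \<inter> {p. \<forall>j. snd p $ j = 1} \<noteq> {}"
  shows "integral_leaf bdg_coord (\<lambda>p. c \<bullet> fst p) (bdg_polytope P \<inter> {p. \<forall>j. snd p $ j = 1})"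
proof -
  have objective: "(\<lambda>p. c \<bullet> fst p) = (\<lambda>p. (c, 0::real^'n) \<bullet> p)"
    by auto
  have "bb_integral bdg_coord v"
    if "v \<in> bdg_vertices P" "\<forall>j. snd v $ j = 1" for v
    using that
    by (auto simp: bdg_vertices_def bdg_indicator_def bb_integral_def bdg_coord_def
        split: sum.splits if_splits)
  then show ?thesis
    unfolding objective
    using assms bdg_polytope_top_face[OF polytope_imp_convex[OF assms(1)]]
    by (intro integral_leaf_face_of_convex_hull[OF finite_bdg_vertices[OF assms(1)]])
       (auto simp: bdg_polytope_eq_hull_vertices)
qed

fun bdg_tree :: "'n list \<Rightarrow> ('n + 'n) bbtree" where
  "bdg_tree [] = Leaf"
| "bdg_tree (i # is) = Branch (Inr i) (Branch (Inl i) Leaf Leaf) (bdg_tree is)"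

lemma bb_size_bdg_tree: "bb_size (bdg_tree is) = 4 * length is + 1"
  by (induction "is") auto

lemma bb_leaf_regions_bdg_tree:
  assumes "L \<in> bb_leaf_regions bdg_coord (Q \<inter> {p. \<forall>j\<in>J. snd p $ j = 1}) (bdg_tree is)"
  shows "(\<exists>i b. b \<in> {0, 1} \<and> L \<subseteq> Q \<inter> {p. snd p $ i = 0 \<and> fst p $ i = b})
         \<or> L = Q \<inter> {p. \<forall>j\<in>J \<union> set is. snd p $ j = 1}"
  using assms
proof (induction "is" arbitrary: J)
  case Nil
  then show ?case by simp
next
  case (Cons i "is")
  have fix_y: "Q \<inter> {p. \<forall>j\<in>J. snd p $ j = 1} \<inter> {p. bdg_coord (Inr i) p = 1}
               = Q \<inter> {p. \<forall>j\<in>insert i J. snd p $ j = 1}"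
    by (auto simp: bdg_coord_def)
  from Cons.prems consider b where "b \<in> {0, 1}"
      "L = Q \<inter> {p. \<forall>j\<in>J. snd p $ j = 1} \<inter> {p. bdg_coord (Inr i) p = 0} \<inter> {p. bdg_coord (Inl i) p = b}"
    | "L \<in> bb_leaf_regions bdg_coord (Q \<inter> {p. \<forall>j\<in>insert i J. snd p $ j = 1}) (bdg_tree is)"
    by (auto simp: fix_y)
  then show ?case
  proof cases
    case (1 b)
    then show ?thesis
      by (intro disjI1 exI[of _ i] exI[of _ b]) (auto simp: bdg_coord_def)
  next
    case 2
    from Cons.IH[OF this] show ?thesis
      by (auto simp: insert_commute)
  qed
qed

theorem proposition2p5:
  fixes P :: "(real^'n) set" and c :: "real^'n"
  assumes "polytope P"
    and "\<forall>x\<in>P. \<forall>i. 0 \<le> x $ i \<and> x $ i \<le> 1"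
  shows "({x. \<exists>y. (x, y) \<in> bdg_polytope P \<and> binary_vec x \<and> binary_vec y}
           = P \<inter> {x. binary_vec x})
         \<and> (\<exists>T. bb_solves bdg_coord (\<lambda>p. c \<bullet> fst p) (bdg_polytope P) T
              \<and> bb_size T \<le> 4 * CARD('n) + 1)"
proof
  have cube: "P \<subseteq> cbox 0 1"
    using assms(2) by (auto simp: mem_box_cart)
  then show "{x. \<exists>y. (x, y) \<in> bdg_polytope P \<and> binary_vec x \<and> binary_vec y} = P \<inter> {x. binary_vec x}"
    by (intro binary_points_bdg_polytope polytope_imp_convex assms(1))
  obtain "is" :: "'n list" where "is": "distinct is" "set is = UNIV"
    using finite_distinct_list[OF finite_class.finite_UNIV] by blast
  define top where "top = bdg_polytope P \<inter> {p. \<forall>j. snd p $ j = 1}"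
  have "L = {} \<or> L = top" if "L \<in> bb_leaf_regions bdg_coord (bdg_polytope P) (bdg_tree is)" for L
    using bb_leaf_regions_bdg_tree[of L "bdg_polytope P" "{}"] that "is"(2)
      bdg_polytope_fractional_if_indicator_zero[OF assms(1) cube]
    by (fastforce simp: top_def)
  moreover have "top = {} \<or> integral_leaf bdg_coord (\<lambda>p. c \<bullet> fst p) top"
    using integral_leaf_bdg_top_face[OF assms(1)] by (auto simp: top_def)
  ultimately have "bb_solves bdg_coord (\<lambda>p. c \<bullet> fst p) (bdg_polytope P) (bdg_tree is)"
    unfolding bb_solves_def by blast
  moreover have "bb_size (bdg_tree is) = 4 * CARD('n) + 1"
    using "is" by (simp add: bb_size_bdg_tree distinct_card[symmetric])
  ultimately show "\<exists>T. bb_solves bdg_coord (\<lambda>p. c \<bullet> fst p) (bdg_polytope P) T \<and> bb_size T \<le> 4 * CARD('n) + 1"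
    by auto
qed

end
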